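(* Let $\phi\in L^2(\mathbb R)$ have compact support and suppose $\{\phi(\cdot-k)\}_{k\in\mathbb Z}$ is a Riesz basis for its span with constants $d_1,d_2$. Let $M\in\mathbb N$, $M_1,M_2\in\mathbb Z$, let $\mathcal T=\operatorname{span}\{\sqrt M\phi(M\cdot-m):m=M_1,\dots,M_2\}$, and suppose $M,M_1,M_2$ are such that $\mathcal T\subseteq\mathcal H$. Then: 1. Given $\epsilon>0$ there exists $c_0=c_0(\epsilon)$ such that $E(\mathcal T,z)^2<1-\frac{d_1}{d_2}+\epsilon$ for $z\ge c_0M$. 2. If moreover $|\hat\phi(\omega)|\le c(1+|\omega|)^{-\alpha}$ for all $\omega\in\mathbb R$, for some constant $c$ and some $\alpha>\tfrac12$, then given $\epsilon>0$ there exists $c_0=c_0(\epsilon)$ such that $E(\mathcal T,z)^2<\epsilon$ for $z\ge c_0M$.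
   Context: $\mathcal H=\{f\in L^2(\mathbb R):\operatorname{supp}f\subseteq[0,1]\}$; $\hat f(\omega)=\int f(x)e^{-2\pi i\omega x}dx$; $\|g\|_J^2=\int_J|g|^2$. $E(\mathcal T,z)=\sup\{\|\hat f\|_{\mathbb R\setminus(-z,z)}:f\in\mathcal T,\|f\|=1\}$. Riesz basis with constants $d_1,d_2$: $d_1\sum|a_k|^2\le\|\sum a_k\phi(\cdot-k)\|^2\le d_2\sum|a_k|^2$ for all $(a_k)\in\ell^2(\mathbb Z)$. *)

theory Defs
  imports "HOL-Analysis.Analysis"
begin

definition l2sq_on :: "real set \<Rightarrow> (real \<Rightarrow> complex) \<Rightarrow> ennreal" where
  "l2sq_on J f = (\<integral>\<^sup>+ x. indicator J x * ennreal ((cmod (f x))\<^sup>2) \<partial>lborel)"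

abbreviation l2sq :: "(real \<Rightarrow> complex) \<Rightarrow> ennreal" where
  "l2sq f \<equiv> l2sq_on UNIV f"

definition fourier :: "(real \<Rightarrow> complex) \<Rightarrow> real \<Rightarrow> complex" where
  "fourier f w = (\<integral> x. f x * cis (- 2 * pi * w * x) \<partial>lborel)"

definition H :: "(real \<Rightarrow> complex) set" where
  "H = {f. f \<in> borel_measurable lborel \<and> l2sq f < \<infinity> \<and>
           (AE x in lborel. x \<notin> {0..1} \<longrightarrow> f x = 0)}"

text \<open>E(T,z) = sup { ||hat f||_{R \ (-z,z)} : f in T, ||f|| = 1 } (sup of the empty set read as 0).\<close>
definition E :: "(real \<Rightarrow> complex) set \<Rightarrow> real \<Rightarrow> real" where
  "E T z = Sup (insert 0 {sqrt (enn2real (l2sq_on (- {-z<..<z}) (fourier f))) | f. f \<in> T \<and> l2sq f = 1})"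

definition riesz_translates :: "(real \<Rightarrow> complex) \<Rightarrow> real \<Rightarrow> real \<Rightarrow> bool" where
  "riesz_translates \<phi> d1 d2 \<longleftrightarrow>
     (\<forall>a :: int \<Rightarrow> complex. (\<lambda>k. (cmod (a k))\<^sup>2) summable_on UNIV \<longrightarrow>
        ennreal (d1 * (\<Sum>\<^sub>\<infinity>k. (cmod (a k))\<^sup>2)) \<le> l2sq (\<lambda>x. \<Sum>\<^sub>\<infinity>k. a k * \<phi> (x - of_int k)) \<and>
        l2sq (\<lambda>x. \<Sum>\<^sub>\<infinity>k. a k * \<phi> (x - of_int k)) \<le> ennreal (d2 * (\<Sum>\<^sub>\<infinity>k. (cmod (a k))\<^sup>2)))"

definition Tspace :: "(real \<Rightarrow> complex) \<Rightarrow> nat \<Rightarrow> int \<Rightarrow> int \<Rightarrow> (real \<Rightarrow> complex) set" where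
  "Tspace \<phi> M M1 M2 = {f. \<exists>c :: int \<Rightarrow> complex.
      f = (\<lambda>x. \<Sum>m\<in>{M1..M2}. c m * complex_of_real (sqrt (real M)) * \<phi> (real M * x - of_int m))}"

end

theory Submission
  imports Defs
begin

text \<open>
  For f(x) = \<Sum>m c(m) sqrt M \<phi>(M x - m) one has f^(M u) = M^(-1/2) \<phi>^(u) P(u), where
  P(u) = \<Sum>m c(m) exp(-2\<pi>i m u) is 1-periodic with \<integral>[0,1] |P|^2 = \<Sum>m |c(m)|^2.
  Folding the line onto [0,1), the energy of f^ outside (-z,z) is therefore at most
  \<Sum>m |c(m)|^2 times the supremum over v of the tail sums of |\<phi>^(v+j)|^2 over the integers j
  with |v+j| \<ge> z/M. The lower Riesz bound gives \<Sum>m |c(m)|^2 \<le> 1/d1 when ||f|| = 1, and the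
  tail sums tend to 0 uniformly in v: for each v they are tails of a convergent series (Bessel's
  inequality for the exponentials exp(2\<pi>i(v+j)x) on an integer-length window containing the
  support of \<phi>), and v \<mapsto> (\<phi>^(v+j))_j is Lipschitz into l^2.
  Hence E(T,z)^2 \<rightarrow> 0 as z/M \<rightarrow> \<infinity>.
\<close>

lemma cis_integer_has_integral:
  fixes n :: int and T :: nat
  shows "((\<lambda>x. cis (2 * pi * of_int n * x)) has_integral (if n = 0 then of_nat T else 0)) {a..a + real T}"
proof (cases "n = 0")
  case True
  then show ?thesis
    using has_integral_const_real[of "1::complex" a "a + real T"] by (simp add: scaleR_conv_of_real)
next
  case False
  define K where "K = inverse (\<i> * of_real (2 * pi * of_int n))"
  define F where "F x = cis (2 * pi * of_int n * x) * K" for x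
  have nz: "\<i> * complex_of_real (2 * pi * of_int n) \<noteq> 0" using False by simp
  have deriv: "(F has_vector_derivative cis (2 * pi * of_int n * x)) (at x within {a..a + real T})" for x
  proof -
    have "((\<lambda>x. cis (2 * pi * of_int n * x)) has_derivative
        (\<lambda>t. (2 * pi * of_int n * t) *\<^sub>R (\<i> * cis (2 * pi * of_int n * x)))) (at x within {a..a + real T})"
      by (intro has_derivative_cis derivative_eq_intros) auto
    then have "(F has_derivative (\<lambda>t. ((2 * pi * of_int n * t) *\<^sub>R (\<i> * cis (2 * pi * of_int n * x))) * K))
        (at x within {a..a + real T})"
      unfolding F_def by (rule has_derivative_mult_left)
    then show ?thesis
      unfolding has_vector_derivative_def
      by (rule has_derivative_eq_rhs) (use nz in \<open>auto simp: K_def fun_eq_iff scaleR_conv_of_real field_simps\<close>)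
  qed
  have "F (a + real T) = F a"
  proof -
    have "cis (2 * pi * of_int n * (a + real T)) = cis (2 * pi * of_int n * a) * cis (2 * pi * of_int (n * int T))"
      by (simp add: cis_mult[symmetric] algebra_simps)
    also have "cis (2 * pi * of_int (n * int T)) = 1" by (rule cis_multiple_2pi) simp
    finally show ?thesis by (simp add: F_def)
  qed
  moreover have "((\<lambda>x. cis (2 * pi * of_int n * x)) has_integral (F (a + real T) - F a)) {a..a + real T}"
    by (rule fundamental_theorem_of_calculus) (auto intro: deriv)
  ultimately show ?thesis using False by simp
qed

lemma norm_exp_sum_sq:
  fixes b :: "int \<Rightarrow> complex"
  shows "complex_of_real ((cmod (\<Sum>j\<in>J. b j * cis (2 * pi * (w + of_int j) * x)))\<^sup>2)
      = (\<Sum>j\<in>J. \<Sum>k\<in>J. b j * cnj (b k) * cis (2 * pi * of_int (j - k) * x))"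
proof -
  have "complex_of_real ((cmod (\<Sum>j\<in>J. b j * cis (2 * pi * (w + of_int j) * x)))\<^sup>2)
      = (\<Sum>j\<in>J. \<Sum>k\<in>J. (b j * cis (2 * pi * (w + of_int j) * x)) * (cnj (b k) * cis (- (2 * pi * (w + of_int k) * x))))"
    unfolding complex_norm_square cnj_sum sum_product complex_cnj_mult cis_cnj by simp
  also have "\<dots> = (\<Sum>j\<in>J. \<Sum>k\<in>J. b j * cnj (b k) * cis (2 * pi * of_int (j - k) * x))"
  proof (intro sum.cong refl)
    fix j k
    have "2 * pi * (w + of_int j) * x + - (2 * pi * (w + of_int k) * x) = 2 * pi * of_int (j - k) * x"
      by (simp add: field_simps)
    then have "cis (2 * pi * (w + of_int j) * x) * cis (- (2 * pi * (w + of_int k) * x)) = cis (2 * pi * of_int (j - k) * x)"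
      by (simp only: cis_mult)
    then show "(b j * cis (2 * pi * (w + of_int j) * x)) * (cnj (b k) * cis (- (2 * pi * (w + of_int k) * x)))
        = b j * cnj (b k) * cis (2 * pi * of_int (j - k) * x)"
      by (simp add: mult_ac)
  qed
  finally show ?thesis .
qed

lemma nn_integral_window_exp_sum_sq:
  fixes J :: "int set" and b :: "int \<Rightarrow> complex" and T :: nat
  assumes J: "finite J"
  shows "(\<integral>\<^sup>+x. indicator {a..a + real T} x * ennreal ((cmod (\<Sum>j\<in>J. b j * cis (2 * pi * (w + of_int j) * x)))\<^sup>2) \<partial>lborel)
      = ennreal (real T * (\<Sum>j\<in>J. (cmod (b j))\<^sup>2))"
proof -
  define h where "h x = (\<Sum>j\<in>J. b j * cis (2 * pi * (w + of_int j) * x))" for x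
  have diagonal: "(\<Sum>j\<in>J. \<Sum>k\<in>J. b j * cnj (b k) * (if j - k = 0 then of_nat T else 0))
      = complex_of_real (real T * (\<Sum>j\<in>J. (cmod (b j))\<^sup>2))"
  proof -
    have "(\<Sum>j\<in>J. \<Sum>k\<in>J. b j * cnj (b k) * (if j - k = 0 then of_nat T else 0)) = (\<Sum>j\<in>J. b j * cnj (b j) * of_nat T)"
      using J by (simp add: if_distrib sum.If_cases Int_absorb1 cong: if_cong)
    also have "\<dots> = complex_of_real (real T * (\<Sum>j\<in>J. (cmod (b j))\<^sup>2))"
      using complex_norm_square[symmetric] by (simp add: sum_distrib_left sum_distrib_right mult.commute)
    finally show ?thesis .
  qed
  have "((\<lambda>x. complex_of_real ((cmod (h x))\<^sup>2)) has_integral complex_of_real (real T * (\<Sum>j\<in>J. (cmod (b j))\<^sup>2))) {a..a + real T}"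
    unfolding h_def norm_exp_sum_sq diagonal[symmetric]
    by (intro has_integral_sum J has_integral_mult_right cis_integer_has_integral)
  from has_integral_linear[OF this bounded_linear_Re]
  have "((\<lambda>x. (cmod (h x))\<^sup>2) has_integral (real T * (\<Sum>j\<in>J. (cmod (b j))\<^sup>2))) {a..a + real T}"
    by (simp add: o_def)
  then have "(\<integral>\<^sup>+x. ennreal (indicator {a..a + real T} x * (cmod (h x))\<^sup>2) \<partial>lborel) = ennreal (real T * (\<Sum>j\<in>J. (cmod (b j))\<^sup>2))"
    by (rule nn_integral_has_integral_lebesgue[rotated]) simp
  then show ?thesis
    by (simp add: h_def indicator_mult_ennreal mult.commute)
qed

lemma exp_sum_shift_int:
  fixes c :: "int \<Rightarrow> complex" and j :: int
  shows "(\<Sum>m\<in>I. c m * cis (- 2 * pi * of_int m * (v + of_int j))) = (\<Sum>m\<in>I. c m * cis (- 2 * pi * of_int m * v))"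
proof (intro sum.cong refl)
  fix m
  have "cis (- 2 * pi * of_int m * (v + of_int j)) = cis (- 2 * pi * of_int m * v) * cis (2 * pi * of_int (- (m * j)))"
    unfolding cis_mult by (rule arg_cong[where f=cis]) (simp add: algebra_simps)
  also have "cis (2 * pi * of_int (- (m * j))) = 1" by (rule cis_multiple_2pi) simp
  finally show "c m * cis (- 2 * pi * of_int m * (v + of_int j)) = c m * cis (- 2 * pi * of_int m * v)" by simp
qed

lemma nn_integral_unit_exp_sum_sq:
  fixes c :: "int \<Rightarrow> complex"
  assumes I: "finite I"
  shows "(\<integral>\<^sup>+v. indicator {0..1} v * ennreal ((cmod (\<Sum>m\<in>I. c m * cis (- 2 * pi * of_int m * v)))\<^sup>2) \<partial>lborel)
      = ennreal (\<Sum>m\<in>I. (cmod (c m))\<^sup>2)"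
proof -
  have inj: "inj_on uminus I" by (simp add: inj_on_def)
  have "(\<Sum>m\<in>I. c m * cis (- 2 * pi * of_int m * v)) = (\<Sum>j\<in>uminus ` I. c (- j) * cis (2 * pi * (0 + of_int j) * v))" for v
    unfolding sum.reindex[OF inj] by (simp add: o_def)
  moreover have "(\<Sum>m\<in>I. (cmod (c m))\<^sup>2) = (\<Sum>j\<in>uminus ` I. (cmod (c (- j)))\<^sup>2)"
    unfolding sum.reindex[OF inj] by (simp add: o_def)
  ultimately show ?thesis
    using nn_integral_window_exp_sum_sq[where J="uminus ` I" and b="\<lambda>j. c (- j)" and w=0 and a=0 and T=1] I
    by simp
qed

lemma integrable_of_l2sq_bounded_support:
  fixes g :: "real \<Rightarrow> complex"
  assumes meas: "g \<in> borel_measurable lborel" and L2: "l2sq g < \<infinity>"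
    and supp: "\<And>x. x \<notin> {a..b} \<Longrightarrow> g x = 0"
  shows "integrable lborel g"
proof (rule integrableI_bounded[OF meas])
  have pointwise: "ennreal (norm (g x)) \<le> indicator {a..b} x + ennreal ((cmod (g x))\<^sup>2)" for x
  proof (cases "x \<in> {a..b}")
    case True
    have "0 \<le> (cmod (g x) - 1)\<^sup>2" by simp
    then have "cmod (g x) \<le> 1 + (cmod (g x))\<^sup>2"
      using norm_ge_zero[of "g x"] unfolding power2_diff power_one mult_1_right by linarith
    then have "ennreal (cmod (g x)) \<le> 1 + ennreal ((cmod (g x))\<^sup>2)"
      by (metis ennreal_leI ennreal_plus ennreal_1 zero_le_one zero_le_power2)
    then show ?thesis using True by simp
  next
    case False
    then show ?thesis using supp[of x] by simp
  qed
  have "(\<integral>\<^sup>+ x. ennreal (norm (g x)) \<partial>lborel) \<le> (\<integral>\<^sup>+ x. indicator {a..b} x + ennreal ((cmod (g x))\<^sup>2) \<partial>lborel)"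
    by (intro nn_integral_mono pointwise)
  also have "\<dots> = emeasure lborel {a..b} + l2sq g"
    using meas by (subst nn_integral_add) (auto simp: l2sq_on_def)
  also have "\<dots> < \<infinity>" using L2 by (simp add: less_top emeasure_lborel_Icc_eq)
  finally show "(\<integral>\<^sup>+ x. ennreal (norm (g x)) \<partial>lborel) < \<infinity>" .
qed

lemma borel_measurable_cis [measurable]: "cis \<in> borel_measurable borel"
  by (intro borel_measurable_continuous_onI continuous_intros)

lemma integrable_mult_cis:
  fixes g :: "real \<Rightarrow> complex"
  assumes "integrable lborel g"
  shows "integrable lborel (\<lambda>x. g x * cis (c * x))"
proof (rule Bochner_Integration.integrable_bound[OF assms])
  show "(\<lambda>x. g x * cis (c * x)) \<in> borel_measurable lborel"
    using borel_measurable_integrable[OF assms] by measurable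
  show "AE x in lborel. norm (g x * cis (c * x)) \<le> norm (g x)"
    by (intro AE_I2) (simp add: norm_mult)
qed

lemma borel_measurable_fourier:
  fixes g :: "real \<Rightarrow> complex"
  assumes "g \<in> borel_measurable lborel"
  shows "fourier g \<in> borel_measurable borel"
proof -
  have "(\<lambda>(w, x). g x * cis (- 2 * pi * w * x)) \<in> borel_measurable (borel \<Otimes>\<^sub>M lborel)"
    using assms by (simp add: measurable_lborel1)
  then show ?thesis
    unfolding fourier_def[abs_def] by (rule lborel.borel_measurable_lebesgue_integral)
qed

lemma fourier_mult_cis_minus_1:
  fixes g :: "real \<Rightarrow> complex"
  assumes int: "integrable lborel g"
  shows "fourier (\<lambda>x. g x * (cis (- 2 * pi * d * x) - 1)) w = fourier g (d + w) - fourier g w"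
proof -
  have "fourier (\<lambda>x. g x * (cis (- 2 * pi * d * x) - 1)) w
      = (\<integral>x. g x * cis (- 2 * pi * (d + w) * x) - g x * cis (- 2 * pi * w * x) \<partial>lborel)"
    unfolding fourier_def
  proof (intro Bochner_Integration.integral_cong refl)
    fix x
    have "cis (- 2 * pi * d * x) * cis (- 2 * pi * w * x) = cis (- 2 * pi * (d + w) * x)"
      by (simp add: cis_mult algebra_simps)
    then show "g x * (cis (- 2 * pi * d * x) - 1) * cis (- 2 * pi * w * x)
        = g x * cis (- 2 * pi * (d + w) * x) - g x * cis (- 2 * pi * w * x)"
      by (simp add: algebra_simps)
  qed
  also have "\<dots> = fourier g (d + w) - fourier g w"
    unfolding fourier_def
    by (rule Bochner_Integration.integral_diff) (rule integrable_mult_cis[OF int])+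
  finally show ?thesis .
qed

lemma has_bochner_integral_mult_cnj_exp_sum:
  fixes g :: "real \<Rightarrow> complex" and b :: "int \<Rightarrow> complex"
  assumes int: "integrable lborel g"
  shows "has_bochner_integral lborel (\<lambda>x. g x * cnj (\<Sum>j\<in>J. b j * cis (2 * pi * (w + of_int j) * x)))
      (\<Sum>j\<in>J. cnj (b j) * fourier g (w + of_int j))"
proof -
  have "(\<lambda>x. g x * cnj (\<Sum>j\<in>J. b j * cis (2 * pi * (w + of_int j) * x)))
      = (\<lambda>x. \<Sum>j\<in>J. cnj (b j) * (g x * cis (- 2 * pi * (w + of_int j) * x)))"
    by (simp add: cnj_sum cis_cnj sum_distrib_left mult_ac)
  moreover have "has_bochner_integral lborel (\<lambda>x. g x * cis (- 2 * pi * (w + of_int j) * x)) (fourier g (w + of_int j))" for j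
    using integrable_mult_cis[OF int, of "- 2 * pi * (w + of_int j)"]
    by (simp add: has_bochner_integral_iff fourier_def)
  ultimately show ?thesis
    by (simp add: has_bochner_integral_sum has_bochner_integral_mult_right)
qed

lemma mult_le_weighted_sum_sq:
  fixes p q t :: real
  assumes "t > 0"
  shows "p * q \<le> t / 2 * p\<^sup>2 + 1 / (2 * t) * q\<^sup>2"
proof -
  have "0 \<le> (t * p - q)\<^sup>2" by simp
  then show ?thesis using assms by (simp add: field_simps power2_eq_square)
qed

lemma nn_integral_norm_mult_cnj_le:
  fixes g h :: "real \<Rightarrow> complex"
  assumes g: "g \<in> borel_measurable lborel" and h: "h \<in> borel_measurable lborel" and A: "A \<in> sets borel"
    and supp: "\<And>x. x \<notin> A \<Longrightarrow> g x = 0" and t: "t > 0"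
  shows "(\<integral>\<^sup>+x. ennreal (cmod (g x * cnj (h x))) \<partial>lborel) \<le> ennreal (t / 2) * l2sq g + ennreal (1 / (2 * t)) * l2sq_on A h"
proof -
  have "(\<integral>\<^sup>+x. ennreal (cmod (g x * cnj (h x))) \<partial>lborel) \<le> (\<integral>\<^sup>+x. ennreal (t / 2) * ennreal ((cmod (g x))\<^sup>2)
      + ennreal (1 / (2 * t)) * (indicator A x * ennreal ((cmod (h x))\<^sup>2)) \<partial>lborel)"
  proof (intro nn_integral_mono)
    fix x
    have "cmod (g x) * cmod (h x) \<le> t / 2 * (cmod (g x))\<^sup>2 + 1 / (2 * t) * (cmod (h x))\<^sup>2"
      using t by (rule mult_le_weighted_sum_sq)
    then show "ennreal (cmod (g x * cnj (h x))) \<le> ennreal (t / 2) * ennreal ((cmod (g x))\<^sup>2)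
        + ennreal (1 / (2 * t)) * (indicator A x * ennreal ((cmod (h x))\<^sup>2))"
      using supp[of x] t
      by (cases "x \<in> A") (auto simp: norm_mult ennreal_plus[symmetric] ennreal_mult[symmetric] simp del: ennreal_plus intro!: ennreal_leI)
  qed
  also have "\<dots> = ennreal (t / 2) * l2sq g + ennreal (1 / (2 * t)) * l2sq_on A h"
    using g h A by (simp add: nn_integral_add nn_integral_cmult l2sq_on_def measurable_lborel1)
  finally show ?thesis .
qed

text \<open>Bessel's inequality for the frequencies w + j, j \<in> \<int>: the exponentials are orthogonal
  on any window of integer length T, so the trigonometric polynomial h built from the samples
  of g^ satisfies \<integral>window |h|^2 = T S for S = \<Sum>j |g^(w+j)|^2, and
  S = \<integral> g (cnj h) \<le> (T/2) ||g||^2 + S/2 by the pointwise AM-GM inequality above.\<close>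
lemma sum_fourier_samples_le:
  fixes g :: "real \<Rightarrow> complex" and J :: "int set" and T :: nat
  assumes meas: "g \<in> borel_measurable lborel" and L2: "l2sq g < \<infinity>"
    and supp: "\<And>x. x \<notin> {a..a + real T} \<Longrightarrow> g x = 0" and J: "finite J" and T: "T \<ge> 1"
  shows "(\<Sum>j\<in>J. (cmod (fourier g (w + of_int j)))\<^sup>2) \<le> real T * enn2real (l2sq g)"
proof -
  define h where "h x = (\<Sum>j\<in>J. fourier g (w + of_int j) * cis (2 * pi * (w + of_int j) * x))" for x
  define S where "S = (\<Sum>j\<in>J. (cmod (fourier g (w + of_int j)))\<^sup>2)"
  define G where "G = enn2real (l2sq g)"
  have T0: "real T > 0" using T by simp
  have S0: "S \<ge> 0" unfolding S_def by (intro sum_nonneg) simp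
  have G0: "G \<ge> 0" by (simp add: G_def)
  have LG: "l2sq g = ennreal G" using L2 unfolding G_def by (simp add: less_top)
  have int: "integrable lborel g" by (rule integrable_of_l2sq_bounded_support[OF meas L2 supp])
  have hmeas: "h \<in> borel_measurable lborel" unfolding h_def by measurable
  have "(\<Sum>j\<in>J. cnj (fourier g (w + of_int j)) * fourier g (w + of_int j)) = complex_of_real S"
    unfolding S_def of_real_sum complex_norm_square by (simp add: mult.commute)
  then have prod: "has_bochner_integral lborel (\<lambda>x. g x * cnj (h x)) (complex_of_real S)"
    using has_bochner_integral_mult_cnj_exp_sum[OF int, where J=J and b="\<lambda>j. fourier g (w + of_int j)" and w=w]
    by (simp add: h_def)
  note intprod = integrable.intros[OF prod]
  have "complex_of_real S = (\<integral>x. g x * cnj (h x) \<partial>lborel)"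
    using prod by (simp add: has_bochner_integral_integral_eq)
  then have "ennreal S \<le> (\<integral>\<^sup>+x. ennreal (cmod (g x * cnj (h x))) \<partial>lborel)"
    using integral_norm_bound_ennreal[OF intprod] S0 by (metis norm_of_real abs_of_nonneg)
  also have "\<dots> \<le> ennreal (real T / 2) * l2sq g + ennreal (1 / (2 * real T)) * l2sq_on {a..a + real T} h"
    using T0 by (intro nn_integral_norm_mult_cnj_le meas hmeas supp) auto
  also have "\<dots> = ennreal (real T / 2 * G + S / 2)"
    unfolding l2sq_on_def[of "{a..a + real T}"] h_def nn_integral_window_exp_sum_sq[OF J]
    using T0 S0 G0 by (simp add: LG S_def[symmetric] ennreal_mult[symmetric] ennreal_plus[symmetric] del: ennreal_plus)
  finally have "S \<le> real T / 2 * G + S / 2"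
    using T0 S0 by (subst (asm) ennreal_le_iff) (auto simp: G_def)
  then show ?thesis unfolding S_def G_def by simp
qed

lemma norm_cis_minus_1_le: "cmod (cis t - 1) \<le> \<bar>t\<bar>"
proof -
  have "(cmod (cis t - 1))\<^sup>2 = (cos t - 1)\<^sup>2 + (sin t)\<^sup>2"
    by (simp add: cmod_power2)
  also have "\<dots> = 2 - 2 * cos t" using sin_cos_squared_add[of t] by (simp add: power2_diff)
  also have "\<dots> = 4 * (sin (t / 2))\<^sup>2" using cos_double_sin[of "t / 2"] by simp
  also have "\<dots> \<le> 4 * (t / 2)\<^sup>2"
    using abs_sin_x_le_abs_x[of "t / 2"] abs_le_square_iff[of "sin (t / 2)" "t / 2"] by simp
  also have "\<dots> = \<bar>t\<bar>\<^sup>2" by (simp add: power2_eq_square)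
  finally show ?thesis by (rule power2_le_imp_le) simp
qed

lemma norm_sq_le_twice_norm_sq_add:
  fixes x y :: "'a :: real_normed_vector"
  shows "(norm x)\<^sup>2 \<le> 2 * (norm y)\<^sup>2 + 2 * (norm (x - y))\<^sup>2"
proof -
  have "(norm x)\<^sup>2 \<le> (norm y + norm (x - y))\<^sup>2"
    by (intro power_mono norm_triangle_sub) simp
  also have "\<dots> \<le> 2 * (norm y)\<^sup>2 + 2 * (norm (x - y))\<^sup>2"
    using sum_squares_ge_zero[of "norm y - norm (x - y)" 0] by (simp add: power2_eq_square algebra_simps)
  finally show ?thesis .
qed

text \<open>The samples of \<phi>^ depend Lipschitz-continuously on the offset, in l^2: modulating \<phi> by
  exp(-2\<pi>i d x) - 1, which is at most 2\<pi>|d||x| on the window, shifts the samples by d.\<close>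
lemma sum_fourier_samples_diff_le:
  fixes \<phi> :: "real \<Rightarrow> complex" and T :: nat
  assumes meas: "\<phi> \<in> borel_measurable lborel" and L2: "l2sq \<phi> < \<infinity>"
    and supp: "\<And>x. x \<notin> {a..a + real T} \<Longrightarrow> \<phi> x = 0" and J: "finite J" and T: "T \<ge> 1"
  shows "(\<Sum>j\<in>J. (cmod (fourier \<phi> (v + of_int j) - fourier \<phi> (v' + of_int j)))\<^sup>2)
      \<le> real T * (2 * pi * \<bar>v - v'\<bar> * (\<bar>a\<bar> + real T))\<^sup>2 * enn2real (l2sq \<phi>)"
proof -
  define C where "C = (2 * pi * \<bar>v - v'\<bar> * (\<bar>a\<bar> + real T))\<^sup>2"
  define \<psi> where "\<psi> x = \<phi> x * (cis (- 2 * pi * (v - v') * x) - 1)" for x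
  have \<psi>meas: "\<psi> \<in> borel_measurable lborel" unfolding \<psi>_def using meas by (simp add: measurable_lborel1)
  have \<psi>supp: "\<psi> x = 0" if "x \<notin> {a..a + real T}" for x using supp[OF that] by (simp add: \<psi>_def)
  have C0: "C \<ge> 0" by (simp add: C_def)
  have pointwise: "(cmod (\<psi> x))\<^sup>2 \<le> C * (cmod (\<phi> x))\<^sup>2" for x
  proof (cases "x \<in> {a..a + real T}")
    case True
    have "cmod (cis (- 2 * pi * (v - v') * x) - 1) \<le> 2 * pi * \<bar>v - v'\<bar> * \<bar>x\<bar>"
      using norm_cis_minus_1_le[of "- 2 * pi * (v - v') * x"] by (simp add: abs_mult)
    also have "\<dots> \<le> 2 * pi * \<bar>v - v'\<bar> * (\<bar>a\<bar> + real T)"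
      using True by (intro mult_left_mono) auto
    finally have "cmod (\<psi> x) \<le> cmod (\<phi> x) * (2 * pi * \<bar>v - v'\<bar> * (\<bar>a\<bar> + real T))"
      unfolding \<psi>_def norm_mult by (intro mult_left_mono) simp_all
    then show ?thesis
      by (subst C_def) (metis power_mono power_mult_distrib norm_ge_zero mult.commute)
  next
    case False
    then show ?thesis using \<psi>supp[of x] by (simp add: C_def)
  qed
  have "l2sq \<psi> \<le> (\<integral>\<^sup>+x. ennreal C * ennreal ((cmod (\<phi> x))\<^sup>2) \<partial>lborel)"
    unfolding l2sq_on_def
    using pointwise C0 by (intro nn_integral_mono) (simp add: ennreal_mult[symmetric] ennreal_leI)
  also have "\<dots> = ennreal C * l2sq \<phi>"
    using meas by (subst nn_integral_cmult) (auto simp: l2sq_on_def)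
  finally have \<psi>L2: "l2sq \<psi> \<le> ennreal (C * enn2real (l2sq \<phi>))"
    using L2 by (simp add: C_def ennreal_mult less_top)
  have "(\<Sum>j\<in>J. (cmod (fourier \<psi> (v' + of_int j)))\<^sup>2) \<le> real T * enn2real (l2sq \<psi>)"
    using sum_fourier_samples_le[OF \<psi>meas _ \<psi>supp J T] \<psi>L2 by (simp add: top.not_eq_extremum le_less_trans)
  also have "\<dots> \<le> real T * (C * enn2real (l2sq \<phi>))"
    using enn2real_mono[OF \<psi>L2] C0 by (intro mult_left_mono) simp_all
  also have "fourier \<psi> (v' + of_int j) = fourier \<phi> ((v - v') + (v' + of_int j)) - fourier \<phi> (v' + of_int j)" for j
    unfolding \<psi>_def by (rule fourier_mult_cis_minus_1[OF integrable_of_l2sq_bounded_support[OF meas L2 supp]])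
  ultimately show ?thesis by (simp add: C_def mult.assoc)
qed

lemma bounded_sums_small_tail:
  fixes f :: "int \<Rightarrow> real"
  assumes nonneg: "\<And>j. f j \<ge> 0" and bounded: "\<And>F. finite F \<Longrightarrow> sum f F \<le> B" and e: "\<epsilon> > 0"
  shows "\<exists>K::nat. \<forall>F. finite F \<longrightarrow> (\<forall>j\<in>F. real K < \<bar>of_int j\<bar>) \<longrightarrow> sum f F \<le> \<epsilon>"
proof -
  define A where "A = sum f ` {F. finite F}"
  have bdd: "bdd_above A" unfolding A_def using bounded by (auto intro!: bdd_aboveI)
  obtain F0 where F0: "finite F0" "Sup A - \<epsilon> < sum f F0"
    using less_cSup_iff[of A "Sup A - \<epsilon>"] bdd e unfolding A_def by auto
  define K where "K = nat (\<Sum>j\<in>F0. \<bar>j\<bar>)"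
  have "\<bar>j\<bar> \<le> int K" if "j \<in> F0" for j
    unfolding K_def using member_le_sum[of j F0 abs] F0(1) that by auto
  then have disjoint: "F \<inter> F0 = {}" if "\<forall>j\<in>F. real K < \<bar>of_int j\<bar>" for F
    using that by fastforce
  show ?thesis
  proof (intro exI allI impI)
    fix F :: "int set"
    assume F: "finite F" and far: "\<forall>j\<in>F. real K < \<bar>of_int j\<bar>"
    have "sum f F + sum f F0 = sum f (F \<union> F0)"
      using F F0(1) disjoint[OF far] by (simp add: sum.union_disjoint)
    also have "\<dots> \<le> Sup A" using F F0(1) by (intro cSup_upper bdd) (auto simp: A_def)
    finally show "sum f F \<le> \<epsilon>" using F0(2) by linarith
  qed
qed

lemma exists_grid_point_near:
  assumes "0 \<le> v" "v < 1" "N \<ge> 1"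
  shows "\<exists>i\<in>{0..N}. \<bar>v - real i / real N\<bar> \<le> 1 / real N"
proof -
  define i where "i = nat \<lfloor>v * real N\<rfloor>"
  have "v * real N < real N" and fl: "real i = of_int \<lfloor>v * real N\<rfloor>"
    using assms by (simp_all add: i_def)
  then have i: "real i \<le> v * real N" "v * real N < real i + 1" "real i \<le> real N"
    unfolding fl by linarith+
  then have "\<bar>v * real N - real i\<bar> \<le> 1" by simp
  then have "\<bar>v - real i / real N\<bar> \<le> 1 / real N"
    using assms by (simp add: field_simps abs_le_iff)
  then show ?thesis using i(3) by (intro bexI[of _ i]) auto
qed

lemma exists_nat_inverse_sq_le:
  fixes Q \<epsilon> :: real
  assumes Q: "Q \<ge> 0" and e: "\<epsilon> > 0"
  obtains N :: nat where "N \<ge> 1" and "Q * (1 / real N)\<^sup>2 \<le> \<epsilon>"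
proof -
  obtain N :: nat where N: "Q / \<epsilon> < real N" using reals_Archimedean2 by blast
  have N1: "N \<ge> 1" using N Q e by (cases N) (auto simp: field_simps)
  have "Q \<le> \<epsilon> * real N" using N e by (simp add: field_simps)
  also have "\<dots> \<le> \<epsilon> * (real N)\<^sup>2" using N1 e by (intro mult_left_mono) (auto simp: power2_eq_square)
  finally have "Q * (1 / real N)\<^sup>2 \<le> \<epsilon>"
    using N1 by (simp add: field_simps power2_eq_square)
  with N1 show ?thesis by (rule that)
qed

text \<open>The tails are uniformly small at the finitely many grid points i/N, and every v \<in> [0,1)
  lies within 1/N of one of them, where the Lipschitz bound controls the difference.\<close>
lemma fourier_tail_small_on_unit_interval:
  fixes \<phi> :: "real \<Rightarrow> complex" and T :: nat
  assumes meas: "\<phi> \<in> borel_measurable lborel" and L2: "l2sq \<phi> < \<infinity>"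
    and supp: "\<And>x. x \<notin> {a..a + real T} \<Longrightarrow> \<phi> x = 0" and T: "T \<ge> 1" and e: "\<epsilon> > 0"
  shows "\<exists>K::nat. \<forall>v\<in>{0..<1}. \<forall>J. finite J \<longrightarrow> (\<forall>j\<in>J. real K < \<bar>of_int j\<bar>) \<longrightarrow>
           (\<Sum>j\<in>J. (cmod (fourier \<phi> (v + of_int j)))\<^sup>2) \<le> \<epsilon>"
proof -
  define Q where "Q = real T * (2 * pi * (\<bar>a\<bar> + real T))\<^sup>2 * enn2real (l2sq \<phi>)"
  have Q0: "Q \<ge> 0" by (simp add: Q_def)
  obtain N :: nat where N1: "N \<ge> 1" and grid_error: "Q * (1 / real N)\<^sup>2 \<le> \<epsilon> / 4"
    using exists_nat_inverse_sq_le[OF Q0, of "\<epsilon> / 4"] e by auto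
  have "\<forall>i\<in>{0..N}. \<exists>K::nat. \<forall>F. finite F \<longrightarrow> (\<forall>j\<in>F. real K < \<bar>of_int j\<bar>) \<longrightarrow>
      (\<Sum>j\<in>F. (cmod (fourier \<phi> (real i / real N + of_int j)))\<^sup>2) \<le> \<epsilon> / 4"
    using e by (intro ballI bounded_sums_small_tail[where B = "real T * enn2real (l2sq \<phi>)"]
        sum_fourier_samples_le[OF meas L2 supp _ T]) auto
  then obtain K where K: "\<And>i F. i \<in> {0..N} \<Longrightarrow> finite F \<Longrightarrow> (\<forall>j\<in>F. real (K i) < \<bar>of_int j\<bar>) \<Longrightarrow>
      (\<Sum>j\<in>F. (cmod (fourier \<phi> (real i / real N + of_int j)))\<^sup>2) \<le> \<epsilon> / 4"
    by metis
  show ?thesis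
  proof (intro exI ballI allI impI)
    fix v :: real and J :: "int set"
    assume v: "v \<in> {0..<1}" and J: "finite J" and far: "\<forall>j\<in>J. real (Max (K ` {0..N})) < \<bar>of_int j\<bar>"
    obtain i where i: "i \<in> {0..N}" and near: "\<bar>v - real i / real N\<bar> \<le> 1 / real N"
      using exists_grid_point_near[of v N] v N1 by auto
    have "K i \<le> Max (K ` {0..N})" using i by (intro Max_ge) auto
    then have grid_tail: "(\<Sum>j\<in>J. (cmod (fourier \<phi> (real i / real N + of_int j)))\<^sup>2) \<le> \<epsilon> / 4"
      using far by (intro K[OF i J]) force
    have "(\<Sum>j\<in>J. (cmod (fourier \<phi> (v + of_int j) - fourier \<phi> (real i / real N + of_int j)))\<^sup>2)
        \<le> real T * (2 * pi * \<bar>v - real i / real N\<bar> * (\<bar>a\<bar> + real T))\<^sup>2 * enn2real (l2sq \<phi>)"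
      by (rule sum_fourier_samples_diff_le[OF meas L2 supp J T])
    also have "\<dots> \<le> real T * (2 * pi * (1 / real N) * (\<bar>a\<bar> + real T))\<^sup>2 * enn2real (l2sq \<phi>)"
      using near by (intro mult_right_mono mult_left_mono power_mono) simp_all
    also have "\<dots> = Q * (1 / real N)\<^sup>2"
      unfolding Q_def by (simp add: power_mult_distrib power_divide mult_ac)
    finally have grid_diff: "(\<Sum>j\<in>J. (cmod (fourier \<phi> (v + of_int j) - fourier \<phi> (real i / real N + of_int j)))\<^sup>2) \<le> \<epsilon> / 4"
      using grid_error by linarith
    have "(\<Sum>j\<in>J. (cmod (fourier \<phi> (v + of_int j)))\<^sup>2)
        \<le> (\<Sum>j\<in>J. 2 * (cmod (fourier \<phi> (real i / real N + of_int j)))\<^sup>2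
            + 2 * (cmod (fourier \<phi> (v + of_int j) - fourier \<phi> (real i / real N + of_int j)))\<^sup>2)"
      by (intro sum_mono norm_sq_le_twice_norm_sq_add)
    also have "\<dots> \<le> \<epsilon>"
      using grid_tail grid_diff by (simp add: sum.distrib flip: sum_distrib_left)
    finally show "(\<Sum>j\<in>J. (cmod (fourier \<phi> (v + of_int j)))\<^sup>2) \<le> \<epsilon>" .
  qed
qed

definition fourier_tail_le :: "(real \<Rightarrow> complex) \<Rightarrow> real \<Rightarrow> real \<Rightarrow> bool" where
  "fourier_tail_le \<phi> R e \<longleftrightarrow> (\<forall>v J. finite J \<longrightarrow> (\<forall>j\<in>J. R \<le> \<bar>v + of_int j\<bar>) \<longrightarrow>
      (\<Sum>j\<in>J. (cmod (fourier \<phi> (v + of_int j)))\<^sup>2) \<le> e)"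

lemma exists_fourier_tail_le:
  fixes \<phi> :: "real \<Rightarrow> complex" and T :: nat
  assumes meas: "\<phi> \<in> borel_measurable lborel" and L2: "l2sq \<phi> < \<infinity>"
    and supp: "\<And>x. x \<notin> {a..a + real T} \<Longrightarrow> \<phi> x = 0" and T: "T \<ge> 1" and e: "\<epsilon> > 0"
  shows "\<exists>R. fourier_tail_le \<phi> R \<epsilon>"
proof -
  from fourier_tail_small_on_unit_interval[OF meas L2 supp T e]
  obtain K :: nat where K: "\<forall>v\<in>{0..<1}. \<forall>J. finite J \<longrightarrow> (\<forall>j\<in>J. real K < \<bar>of_int j\<bar>) \<longrightarrow>
      (\<Sum>j\<in>J. (cmod (fourier \<phi> (v + of_int j)))\<^sup>2) \<le> \<epsilon>" ..
  have "fourier_tail_le \<phi> (real K + 1) \<epsilon>"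
    unfolding fourier_tail_le_def
  proof (intro allI impI)
    fix v :: real and J :: "int set"
    assume J: "finite J" and far: "\<forall>j\<in>J. real K + 1 \<le> \<bar>v + of_int j\<bar>"
    define n where "n = \<lfloor>v\<rfloor>"
    have frac: "v - of_int n \<in> {0..<1}"
      using of_int_floor_le[of v] real_of_int_floor_add_one_gt[of v] unfolding n_def by (simp add: algebra_simps)
    have inj: "inj_on (\<lambda>j. j + n) J" by (simp add: inj_on_def)
    have "(\<Sum>j\<in>J. (cmod (fourier \<phi> (v + of_int j)))\<^sup>2)
        = (\<Sum>j\<in>(\<lambda>j. j + n) ` J. (cmod (fourier \<phi> (v - of_int n + of_int j)))\<^sup>2)"
      unfolding sum.reindex[OF inj] by simp
    also have "\<dots> \<le> \<epsilon>"
    proof (rule K[rule_format, OF frac])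
      fix i assume "i \<in> (\<lambda>j. j + n) ` J"
      then obtain j where "j \<in> J" and i: "i = j + n" by blast
      then have "real K + 1 \<le> \<bar>(v - of_int n) + of_int i\<bar>" using far by simp
      then show "real K < \<bar>of_int i\<bar>" using frac by (simp add: abs_le_iff) linarith
    qed (use J in simp)
    finally show "(\<Sum>j\<in>J. (cmod (fourier \<phi> (v + of_int j)))\<^sup>2) \<le> \<epsilon>" .
  qed
  then show ?thesis ..
qed

lemma has_bochner_integral_dilate_shift:
  fixes \<phi> :: "real \<Rightarrow> complex"
  assumes int: "integrable lborel \<phi>" and s: "s > 0"
  shows "has_bochner_integral lborel (\<lambda>x. \<phi> (s * x - t) * cis (- 2 * pi * w * x))
      (complex_of_real (1 / s) * cis (- 2 * pi * t * (w / s)) * fourier \<phi> (w / s))"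
proof -
  have affine: "\<phi> (s * (t / s + (1 / s) * x) - t) * cis (- 2 * pi * w * (t / s + (1 / s) * x))
      = cis (- 2 * pi * t * (w / s)) * (\<phi> x * cis (- 2 * pi * (w / s) * x))" for x
  proof -
    have "s * (t / s + (1 / s) * x) - t = x" using s by (simp add: field_simps)
    moreover have "cis (- 2 * pi * w * (t / s + (1 / s) * x)) = cis (- 2 * pi * t * (w / s)) * cis (- 2 * pi * (w / s) * x)"
      unfolding cis_mult by (rule arg_cong[where f = cis]) (simp add: algebra_simps)
    ultimately show ?thesis by (simp add: mult_ac)
  qed
  have "integrable lborel (\<lambda>x. \<phi> (- t + s * x))"
    using lborel_integrable_real_affine[OF int, of s "- t"] s by simp
  then have "integrable lborel (\<lambda>x. \<phi> (s * x - t) * cis (- 2 * pi * w * x))"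
    using integrable_mult_cis[of "\<lambda>x. \<phi> (s * x - t)" "- 2 * pi * w"] by simp
  moreover have "(\<integral>x. \<phi> (s * x - t) * cis (- 2 * pi * w * x) \<partial>lborel)
      = \<bar>1 / s\<bar> *\<^sub>R (\<integral>x. cis (- 2 * pi * t * (w / s)) * (\<phi> x * cis (- 2 * pi * (w / s) * x)) \<partial>lborel)"
    unfolding affine[symmetric] by (rule lborel_integral_real_affine) (use s in simp)
  moreover have "(\<integral>x. cis (- 2 * pi * t * (w / s)) * (\<phi> x * cis (- 2 * pi * (w / s) * x)) \<partial>lborel)
      = cis (- 2 * pi * t * (w / s)) * fourier \<phi> (w / s)"
    unfolding fourier_def by (rule integral_mult_right_zero)
  ultimately show ?thesis
    using s by (simp add: has_bochner_integral_iff scaleR_conv_of_real mult.assoc)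
qed

lemma fourier_dilated_translates:
  fixes \<phi> :: "real \<Rightarrow> complex" and c :: "int \<Rightarrow> complex" and M :: nat
  assumes int: "integrable lborel \<phi>" and M: "M \<ge> 1"
  shows "fourier (\<lambda>x. \<Sum>m\<in>I. c m * complex_of_real (sqrt (real M)) * \<phi> (real M * x - of_int m)) w
    = complex_of_real (1 / sqrt (real M)) * fourier \<phi> (w / real M) * (\<Sum>m\<in>I. c m * cis (- 2 * pi * of_int m * (w / real M)))"
proof -
  have M0: "real M > 0" using M by simp
  have scale: "complex_of_real (sqrt (real M)) * complex_of_real (1 / real M) = complex_of_real (1 / sqrt (real M))"
  proof -
    have "sqrt (real M) * (1 / real M) = 1 / sqrt (real M)" using M0 by (simp add: field_simps)
    then show ?thesis by (metis of_real_mult)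
  qed
  have "has_bochner_integral lborel
      (\<lambda>x. \<Sum>m\<in>I. c m * complex_of_real (sqrt (real M)) * (\<phi> (real M * x - of_int m) * cis (- 2 * pi * w * x)))
      (\<Sum>m\<in>I. c m * complex_of_real (sqrt (real M)) *
        (complex_of_real (1 / real M) * cis (- 2 * pi * of_int m * (w / real M)) * fourier \<phi> (w / real M)))"
    by (intro has_bochner_integral_sum has_bochner_integral_mult_right has_bochner_integral_dilate_shift int M0)
  then have "fourier (\<lambda>x. \<Sum>m\<in>I. c m * complex_of_real (sqrt (real M)) * \<phi> (real M * x - of_int m)) w
      = (\<Sum>m\<in>I. c m * complex_of_real (sqrt (real M)) *
        (complex_of_real (1 / real M) * cis (- 2 * pi * of_int m * (w / real M)) * fourier \<phi> (w / real M)))"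
    unfolding fourier_def sum_distrib_right mult.assoc by (rule has_bochner_integral_integral_eq)
  also have "\<dots> = (\<Sum>m\<in>I. complex_of_real (1 / sqrt (real M)) * fourier \<phi> (w / real M)
      * (c m * cis (- 2 * pi * of_int m * (w / real M))))"
    by (intro sum.cong refl) (simp only: scale[symmetric] mult_ac)
  finally show ?thesis by (simp only: sum_distrib_left)
qed

lemma suminf_int_decode_le:
  fixes f :: "int \<Rightarrow> ennreal"
  assumes "\<And>F. finite F \<Longrightarrow> sum f F \<le> B"
  shows "(\<Sum>n. f (int_decode n)) \<le> B"
  unfolding suminf_eq_SUP
proof (rule SUP_least)
  fix N
  have "inj_on int_decode {..<N}" using inj_int_decode by (auto simp: inj_on_def inj_def)
  then show "(\<Sum>n<N. f (int_decode n)) \<le> B"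
    using assms[of "int_decode ` {..<N}"] by (simp add: sum.reindex)
qed

lemma nn_integral_periodize:
  fixes W :: "real \<Rightarrow> ennreal"
  assumes Wm: "W \<in> borel_measurable borel"
  shows "(\<integral>\<^sup>+u. W u \<partial>lborel) = (\<integral>\<^sup>+v. indicator {0..<1} v * (\<Sum>n. W (v + of_int (int_decode n))) \<partial>lborel)"
proof -
  define A where "A n = {real_of_int (int_decode n) ..< real_of_int (int_decode n) + 1}" for n
  have A_iff: "u \<in> A n \<longleftrightarrow> \<lfloor>u\<rfloor> = int_decode n" for u n
    by (auto simp: A_def floor_eq_iff)
  have disj: "disjoint_family A"
    using inj_int_decode[of UNIV] by (auto simp: disjoint_family_on_def A_iff inj_def)
  have cover: "(\<Union>n. A n) = UNIV"
    using surj_int_decode by (auto simp: A_iff) (metis surjD)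
  have "(\<integral>\<^sup>+u. W u \<partial>lborel) = (\<integral>\<^sup>+u. (\<Sum>n. indicator (A n) u * W u) \<partial>lborel)"
    using suminf_indicator[OF disj] cover by (simp add: ennreal_suminf_multc)
  also have "\<dots> = (\<Sum>n. \<integral>\<^sup>+u. indicator (A n) u * W u \<partial>lborel)"
    using Wm by (intro nn_integral_suminf) (simp add: A_def measurable_lborel1)
  also have "\<dots> = (\<Sum>n. \<integral>\<^sup>+v. indicator {0..<1} v * W (v + of_int (int_decode n)) \<partial>lborel)"
  proof (intro suminf_cong)
    fix n
    have "(\<integral>\<^sup>+u. indicator (A n) u * W u \<partial>lborel)
        = ennreal \<bar>1\<bar> * (\<integral>\<^sup>+v. indicator (A n) (of_int (int_decode n) + 1 * v) * W (of_int (int_decode n) + 1 * v) \<partial>lborel)"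
      using Wm by (intro nn_integral_real_affine) (auto simp: A_def)
    then show "(\<integral>\<^sup>+u. indicator (A n) u * W u \<partial>lborel) = (\<integral>\<^sup>+v. indicator {0..<1} v * W (v + of_int (int_decode n)) \<partial>lborel)"
      by (simp add: A_def add.commute indicator_def)
  qed
  also have "\<dots> = (\<integral>\<^sup>+v. indicator {0..<1} v * (\<Sum>n. W (v + of_int (int_decode n))) \<partial>lborel)"
    using Wm by (subst nn_integral_suminf[symmetric]) (simp_all add: ennreal_suminf_cmult)
  finally show ?thesis .
qed

lemma nn_integral_tail_fourier_exp_sum_le:
  fixes \<phi> :: "real \<Rightarrow> complex" and c :: "int \<Rightarrow> complex"
  assumes tail: "fourier_tail_le \<phi> R e" and meas: "\<phi> \<in> borel_measurable lborel"
    and I: "finite I" and e: "e \<ge> 0"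
  shows "(\<integral>\<^sup>+u. indicator {u. R \<le> \<bar>u\<bar>} u * ennreal ((cmod (fourier \<phi> u))\<^sup>2 * (cmod (\<Sum>m\<in>I. c m * cis (- 2 * pi * of_int m * u)))\<^sup>2) \<partial>lborel)
      \<le> ennreal (e * (\<Sum>m\<in>I. (cmod (c m))\<^sup>2))"
proof -
  define P where "P u = (\<Sum>m\<in>I. c m * cis (- 2 * pi * of_int m * u))" for u
  define W where "W u = indicator {u. R \<le> \<bar>u\<bar>} u * ennreal ((cmod (fourier \<phi> u))\<^sup>2 * (cmod (P u))\<^sup>2)" for u
  have Wm: "W \<in> borel_measurable borel"
    unfolding W_def P_def using borel_measurable_fourier[OF meas] by measurable
  have fold: "(\<Sum>n. W (v + of_int (int_decode n))) \<le> ennreal (e * (cmod (P v))\<^sup>2)" for v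
  proof (rule suminf_int_decode_le)
    fix F :: "int set" assume F: "finite F"
    have "W (v + of_int j) = ennreal (if R \<le> \<bar>v + of_int j\<bar> then (cmod (fourier \<phi> (v + of_int j)))\<^sup>2 * (cmod (P v))\<^sup>2 else 0)" for j
      unfolding W_def P_def exp_sum_shift_int by simp
    then have "(\<Sum>j\<in>F. W (v + of_int j))
        = ennreal (\<Sum>j\<in>F. if R \<le> \<bar>v + of_int j\<bar> then (cmod (fourier \<phi> (v + of_int j)))\<^sup>2 * (cmod (P v))\<^sup>2 else 0)"
      by (simp add: sum_ennreal)
    also have "\<dots> = ennreal ((\<Sum>j\<in>{j\<in>F. R \<le> \<bar>v + of_int j\<bar>}. (cmod (fourier \<phi> (v + of_int j)))\<^sup>2) * (cmod (P v))\<^sup>2)"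
      unfolding sum.inter_filter[OF F] sum_distrib_right by (auto intro!: arg_cong[where f = ennreal] sum.cong)
    also have "\<dots> \<le> ennreal (e * (cmod (P v))\<^sup>2)"
      using tail F unfolding fourier_tail_le_def by (intro ennreal_leI mult_right_mono) simp_all
    finally show "(\<Sum>j\<in>F. W (v + of_int j)) \<le> ennreal (e * (cmod (P v))\<^sup>2)" .
  qed
  have "(\<integral>\<^sup>+u. W u \<partial>lborel) = (\<integral>\<^sup>+v. indicator {0..<1} v * (\<Sum>n. W (v + of_int (int_decode n))) \<partial>lborel)"
    by (rule nn_integral_periodize[OF Wm])
  also have "\<dots> \<le> (\<integral>\<^sup>+v. ennreal e * (indicator {0..1} v * ennreal ((cmod (P v))\<^sup>2)) \<partial>lborel)"
  proof (rule nn_integral_mono)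
    fix v
    show "indicator {0..<1} v * (\<Sum>n. W (v + of_int (int_decode n))) \<le> ennreal e * (indicator {0..1} v * ennreal ((cmod (P v))\<^sup>2))"
      using fold[of v] e by (cases "v \<in> {0..<1}") (simp_all add: ennreal_mult)
  qed
  also have "\<dots> = ennreal e * (\<integral>\<^sup>+v. indicator {0..1} v * ennreal ((cmod (P v))\<^sup>2) \<partial>lborel)"
    unfolding P_def by (rule nn_integral_cmult) simp
  also have "\<dots> = ennreal e * ennreal (\<Sum>m\<in>I. (cmod (c m))\<^sup>2)"
    unfolding P_def nn_integral_unit_exp_sum_sq[OF I] ..
  also have "\<dots> = ennreal (e * (\<Sum>m\<in>I. (cmod (c m))\<^sup>2))"
    using e by (simp add: ennreal_mult sum_nonneg)
  finally show ?thesis unfolding W_def P_def .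
qed

text \<open>Rescaling u = w / M turns the energy of f^ outside (-z,z) into that of \<phi>^ P outside
  (-z/M, z/M).\<close>
lemma l2sq_tail_fourier_dilated_translates_le:
  fixes \<phi> :: "real \<Rightarrow> complex" and c :: "int \<Rightarrow> complex" and M :: nat
  assumes meas: "\<phi> \<in> borel_measurable lborel" and int: "integrable lborel \<phi>"
    and M: "M \<ge> 1" and I: "finite I"
    and tail: "fourier_tail_le \<phi> R e" and e: "e \<ge> 0" and z: "z \<ge> R * real M"
  shows "l2sq_on (- {-z<..<z}) (fourier (\<lambda>x. \<Sum>m\<in>I. c m * complex_of_real (sqrt (real M)) * \<phi> (real M * x - of_int m)))
      \<le> ennreal (e * (\<Sum>m\<in>I. (cmod (c m))\<^sup>2))"
proof -
  define f where "f x = (\<Sum>m\<in>I. c m * complex_of_real (sqrt (real M)) * \<phi> (real M * x - of_int m))" for x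
  define P where "P u = (\<Sum>m\<in>I. c m * cis (- 2 * pi * of_int m * u))" for u
  have M0: "real M > 0" using M by simp
  have fm: "fourier f \<in> borel_measurable borel"
    unfolding f_def using meas by (intro borel_measurable_fourier) (simp add: measurable_lborel1)
  have fourier_f: "ennreal (real M) * ennreal ((cmod (fourier f (real M * u)))\<^sup>2) = ennreal ((cmod (fourier \<phi> u))\<^sup>2 * (cmod (P u))\<^sup>2)" for u
  proof -
    have "(cmod (fourier f (real M * u)))\<^sup>2 = (1 / real M) * ((cmod (fourier \<phi> u))\<^sup>2 * (cmod (P u))\<^sup>2)"
      unfolding f_def P_def fourier_dilated_translates[OF int M] using M0
      by (simp add: norm_mult norm_divide power_mult_distrib power_divide)
    then show ?thesis using M0 by (simp add: ennreal_mult[symmetric] del: ennreal_mult)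
  qed
  have far: "R \<le> \<bar>u\<bar>" if "real M * u \<in> - {-z<..<z}" for u
  proof -
    have "R * real M \<le> \<bar>real M * u\<bar>" using that z by auto
    then show ?thesis using M0 by (simp add: abs_mult mult.commute)
  qed
  have "l2sq_on (- {-z<..<z}) (fourier f)
      = ennreal \<bar>real M\<bar> * (\<integral>\<^sup>+u. indicator (- {-z<..<z}) (0 + real M * u) * ennreal ((cmod (fourier f (0 + real M * u)))\<^sup>2) \<partial>lborel)"
    unfolding l2sq_on_def using fm M0 by (intro nn_integral_real_affine) auto
  also have "\<dots> = (\<integral>\<^sup>+u. indicator (- {-z<..<z}) (real M * u) * ennreal ((cmod (fourier \<phi> u))\<^sup>2 * (cmod (P u))\<^sup>2) \<partial>lborel)"
    using fm by (simp add: nn_integral_cmult[symmetric]) (intro nn_integral_cong, metis mult.left_commute fourier_f)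
  also have "\<dots> \<le> (\<integral>\<^sup>+u. indicator {u. R \<le> \<bar>u\<bar>} u * ennreal ((cmod (fourier \<phi> u))\<^sup>2 * (cmod (P u))\<^sup>2) \<partial>lborel)"
    using far by (intro nn_integral_mono) (auto split: split_indicator)
  also have "\<dots> \<le> ennreal (e * (\<Sum>m\<in>I. (cmod (c m))\<^sup>2))"
    unfolding P_def by (rule nn_integral_tail_fourier_exp_sum_le[OF tail meas I e])
  finally show ?thesis unfolding f_def .
qed

lemma riesz_translates_finite:
  fixes \<phi> :: "real \<Rightarrow> complex" and c :: "int \<Rightarrow> complex"
  assumes riesz: "riesz_translates \<phi> d1 d2" and I: "finite I"
  shows "ennreal (d1 * (\<Sum>m\<in>I. (cmod (c m))\<^sup>2)) \<le> l2sq (\<lambda>x. \<Sum>m\<in>I. c m * \<phi> (x - of_int m))"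
    and "l2sq (\<lambda>x. \<Sum>m\<in>I. c m * \<phi> (x - of_int m)) \<le> ennreal (d2 * (\<Sum>m\<in>I. (cmod (c m))\<^sup>2))"
proof -
  define a where "a k = (if k \<in> I then c k else 0)" for k
  have summable: "(\<lambda>k. (cmod (a k))\<^sup>2) summable_on UNIV"
    by (rule finite_nonzero_values_imp_summable_on) (rule finite_subset[OF _ I], auto simp: a_def)
  have "(\<Sum>\<^sub>\<infinity>k. (cmod (a k))\<^sup>2) = (\<Sum>\<^sub>\<infinity>k\<in>I. (cmod (c k))\<^sup>2)"
    by (rule infsum_cong_neutral) (auto simp: a_def)
  then have coeffs: "(\<Sum>\<^sub>\<infinity>k. (cmod (a k))\<^sup>2) = (\<Sum>m\<in>I. (cmod (c m))\<^sup>2)"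
    using I by simp
  have "(\<Sum>\<^sub>\<infinity>k. a k * \<phi> (x - of_int k)) = (\<Sum>\<^sub>\<infinity>k\<in>I. c k * \<phi> (x - of_int k))" for x
    by (rule infsum_cong_neutral) (auto simp: a_def)
  then have combination: "(\<lambda>x. \<Sum>\<^sub>\<infinity>k. a k * \<phi> (x - of_int k)) = (\<lambda>x. \<Sum>m\<in>I. c m * \<phi> (x - of_int m))"
    using I by simp
  from riesz[unfolded riesz_translates_def, rule_format, OF summable]
  show "ennreal (d1 * (\<Sum>m\<in>I. (cmod (c m))\<^sup>2)) \<le> l2sq (\<lambda>x. \<Sum>m\<in>I. c m * \<phi> (x - of_int m))"
    and "l2sq (\<lambda>x. \<Sum>m\<in>I. c m * \<phi> (x - of_int m)) \<le> ennreal (d2 * (\<Sum>m\<in>I. (cmod (c m))\<^sup>2))"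
    unfolding coeffs combination by auto
qed

lemma riesz_translates_le:
  assumes riesz: "riesz_translates \<phi> d1 d2" and d1: "d1 > 0"
  shows "d1 \<le> d2"
proof -
  have "ennreal d1 \<le> l2sq \<phi>" and "l2sq \<phi> \<le> ennreal d2"
    using riesz_translates_finite[OF riesz, of "{0}" "\<lambda>_. 1"] by simp_all
  then have "ennreal d1 \<le> ennreal d2" by (rule order_trans)
  then show ?thesis using d1 by (cases "d2 \<ge> 0") (auto simp: ennreal_le_iff ennreal_neg)
qed

lemma l2sq_dilate:
  fixes g :: "real \<Rightarrow> complex"
  assumes g: "g \<in> borel_measurable borel" and s: "s > 0"
  shows "l2sq (\<lambda>x. complex_of_real (sqrt s) * g (s * x)) = l2sq g"
proof -
  have "l2sq g = (\<integral>\<^sup>+y. ennreal ((cmod (g y))\<^sup>2) \<partial>lborel)" by (simp add: l2sq_on_def)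
  also have "\<dots> = ennreal \<bar>s\<bar> * (\<integral>\<^sup>+x. ennreal ((cmod (g (0 + s * x)))\<^sup>2) \<partial>lborel)"
    using g s by (intro nn_integral_real_affine) auto
  also have "\<dots> = (\<integral>\<^sup>+x. ennreal s * ennreal ((cmod (g (s * x)))\<^sup>2) \<partial>lborel)"
    using g s by (subst nn_integral_cmult) auto
  also have "\<dots> = l2sq (\<lambda>x. complex_of_real (sqrt s) * g (s * x))"
    unfolding l2sq_on_def using s
    by (intro nn_integral_cong) (simp add: norm_mult power_mult_distrib ennreal_mult)
  finally show ?thesis ..
qed

lemma E_sq_le:
  assumes b: "b \<ge> 0"
    and bound: "\<And>f. f \<in> T \<Longrightarrow> l2sq f = 1 \<Longrightarrow> l2sq_on (- {-z<..<z}) (fourier f) \<le> ennreal b"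
  shows "(E T z)\<^sup>2 \<le> b"
proof -
  define S where "S = {sqrt (enn2real (l2sq_on (- {-z<..<z}) (fourier f))) | f. f \<in> T \<and> l2sq f = 1}"
  have ub: "y \<le> sqrt b" if "y \<in> insert 0 S" for y
    using that b bound by (auto simp: S_def intro!: real_sqrt_le_mono enn2real_leI)
  have "E T z \<le> sqrt b"
    unfolding E_def S_def[symmetric] by (rule cSup_least) (auto intro: ub)
  moreover have "0 \<le> E T z"
    unfolding E_def S_def[symmetric] by (rule cSup_upper) (auto intro: bdd_aboveI[OF ub])
  ultimately show ?thesis using b by (metis real_sqrt_le_iff real_sqrt_pow2 power_mono)
qed

lemma E_Tspace_sq_le:
  fixes \<phi> :: "real \<Rightarrow> complex" and M :: nat
  assumes meas: "\<phi> \<in> borel_measurable lborel" and int: "integrable lborel \<phi>"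
    and riesz: "riesz_translates \<phi> d1 d2" and d1: "d1 > 0" and M: "M \<ge> 1"
    and tail: "fourier_tail_le \<phi> R e" and e: "e \<ge> 0" and z: "z \<ge> R * real M"
  shows "(E (Tspace \<phi> M M1 M2) z)\<^sup>2 \<le> e / d1"
proof (rule E_sq_le)
  fix f assume "f \<in> Tspace \<phi> M M1 M2" and f1: "l2sq f = 1"
  then obtain c where f: "f = (\<lambda>x. \<Sum>m\<in>{M1..M2}. c m * complex_of_real (sqrt (real M)) * \<phi> (real M * x - of_int m))"
    unfolding Tspace_def by blast
  have "f = (\<lambda>x. complex_of_real (sqrt (real M)) * (\<Sum>m\<in>{M1..M2}. c m * \<phi> (real M * x - of_int m)))"
    unfolding f by (simp add: sum_distrib_left mult_ac)
  then have "l2sq f = l2sq (\<lambda>y. \<Sum>m\<in>{M1..M2}. c m * \<phi> (y - of_int m))"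
    using l2sq_dilate[of "\<lambda>y. \<Sum>m\<in>{M1..M2}. c m * \<phi> (y - of_int m)" "real M"] meas M
    by (simp add: measurable_lborel1)
  then have "d1 * (\<Sum>m\<in>{M1..M2}. (cmod (c m))\<^sup>2) \<le> 1"
    using riesz_translates_finite(1)[OF riesz, of "{M1..M2}" c] f1 by (simp add: ennreal_le_1)
  then have "e * (d1 * (\<Sum>m\<in>{M1..M2}. (cmod (c m))\<^sup>2)) \<le> e"
    using e by (simp add: mult_left_le)
  then have "e * (\<Sum>m\<in>{M1..M2}. (cmod (c m))\<^sup>2) \<le> e / d1"
    using d1 by (simp add: pos_le_divide_eq mult_ac)
  then show "l2sq_on (- {-z<..<z}) (fourier f) \<le> ennreal (e / d1)"
    unfolding f using l2sq_tail_fourier_dilated_translates_le[OF meas int M _ tail e z, of "{M1..M2}" c]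
    by (auto intro: order_trans ennreal_leI)
qed (use e d1 in simp)

lemma bounded_support_in_window:
  fixes \<phi> :: "real \<Rightarrow> 'a :: zero"
  assumes "bounded {x. \<phi> x \<noteq> 0}"
  obtains a and T :: nat where "T \<ge> 1" and "\<And>x. x \<notin> {a..a + real T} \<Longrightarrow> \<phi> x = 0"
proof -
  obtain B where B: "\<And>x. \<phi> x \<noteq> 0 \<Longrightarrow> \<bar>x\<bar> \<le> B" using assms by (fastforce simp: bounded_iff)
  define T where "T = nat \<lceil>2 * B\<rceil> + 1"
  have T: "2 * B \<le> real T" unfolding T_def using real_nat_ceiling_ge[of "2 * B"] by linarith
  show ?thesis
  proof
    show "T \<ge> 1" by (simp add: T_def)
    show "\<phi> x = 0" if "x \<notin> {- B..- B + real T}" for x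
      using that T B[of x] by (cases "\<phi> x = 0") (auto simp: abs_le_iff)
  qed
qed

lemma E_Tspace_eventually_small:
  fixes \<phi> :: "real \<Rightarrow> complex" and T :: nat
  assumes meas: "\<phi> \<in> borel_measurable lborel" and L2: "l2sq \<phi> < \<infinity>"
    and supp: "\<And>x. x \<notin> {a..a + real T} \<Longrightarrow> \<phi> x = 0" and T: "T \<ge> 1"
    and riesz: "riesz_translates \<phi> d1 d2" and d1: "d1 > 0" and e: "\<epsilon> > 0"
  shows "\<exists>c0. \<forall>(M::nat) M1 M2 z. M \<ge> 1 \<longrightarrow> z \<ge> c0 * real M \<longrightarrow> (E (Tspace \<phi> M M1 M2) z)\<^sup>2 < \<epsilon>"
proof -
  have int: "integrable lborel \<phi>" by (rule integrable_of_l2sq_bounded_support[OF meas L2 supp])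
  obtain R where tail: "fourier_tail_le \<phi> R (\<epsilon> * d1 / 2)"
    using exists_fourier_tail_le[OF meas L2 supp T] e d1 by force
  have "(E (Tspace \<phi> M M1 M2) z)\<^sup>2 < \<epsilon>" if "M \<ge> 1" and "z \<ge> R * real M" for M M1 M2 z
  proof -
    have "(E (Tspace \<phi> M M1 M2) z)\<^sup>2 \<le> \<epsilon> * d1 / 2 / d1"
      using e d1 by (intro E_Tspace_sq_le[OF meas int riesz d1 that(1) tail _ that(2)]) simp
    also have "\<dots> < \<epsilon>" using e d1 by simp
    finally show ?thesis .
  qed
  then show ?thesis by blast
qed

theorem proposition5p10:
  fixes \<phi> :: "real \<Rightarrow> complex" and d1 d2 :: real
  assumes meas: "\<phi> \<in> borel_measurable lborel"
    and L2: "l2sq \<phi> < \<infinity>"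
    and compact_supp: "bounded {x. \<phi> x \<noteq> 0}"
    and d1_pos: "0 < d1"
    and riesz: "riesz_translates \<phi> d1 d2"
  shows "(\<forall>\<epsilon>>0. \<exists>c0. \<forall>(M::nat) (M1::int) (M2::int) (z::real).
            M \<ge> 1 \<longrightarrow> Tspace \<phi> M M1 M2 \<subseteq> H \<longrightarrow> z \<ge> c0 * real M \<longrightarrow>
            (E (Tspace \<phi> M M1 M2) z)\<^sup>2 < 1 - d1 / d2 + \<epsilon>) \<and>
         (\<forall>(c::real) (\<alpha>::real). \<alpha> > 1/2 \<and> (\<forall>\<omega>. cmod (fourier \<phi> \<omega>) \<le> c * (1 + \<bar>\<omega>\<bar>) powr (-\<alpha>)) \<longrightarrow>
           (\<forall>\<epsilon>>0. \<exists>c0. \<forall>(M::nat) (M1::int) (M2::int) (z::real).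
            M \<ge> 1 \<longrightarrow> Tspace \<phi> M M1 M2 \<subseteq> H \<longrightarrow> z \<ge> c0 * real M \<longrightarrow>
            (E (Tspace \<phi> M M1 M2) z)\<^sup>2 < \<epsilon>))"
proof -
  obtain a and T :: nat where T: "T \<ge> 1" and supp: "\<And>x. x \<notin> {a..a + real T} \<Longrightarrow> \<phi> x = 0"
    using bounded_support_in_window[OF compact_supp] by blast
  note small = E_Tspace_eventually_small[OF meas L2 supp T riesz d1_pos]
  have "d1 / d2 \<le> 1" using riesz_translates_le[OF riesz d1_pos] d1_pos by simp
  then have "1 - d1 / d2 + \<epsilon> \<ge> \<epsilon>" for \<epsilon> by simp
  then show ?thesis using small by (meson order_less_le_trans)
qed

end
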